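(* Let $n,p\ge1$ be integers, let $\mathbf{A}^{p+1}_{n+1}$ be as defined in the context, and let $k=\max\{n+1,p\}$. Then $k.a\vee k.(\sim a)=\top$ for every $a\in A$, whereas there exists $a\in A$ with $n.a\vee n.(\sim a)\ne\top$. That is, $\mathbf{A}^{p+1}_{n+1}$ satisfies the identity $k.x\vee k.\neg x\approx\top$ but not the identity $n.x\vee n.\neg x\approx\top$.
   Context: Order $\mathbb{Z}\times\mathbb{Z}$ lexicographically: $(m,r)\preccurlyeq(k,s)$ iff $m<k$, or $m=k$ and $r\le s$; addition/subtraction of pairs is componentwise, and $\min,\max$ of pairs refer to $\preccurlyeq$. For an integer $n\ge1$ let $L^\omega_{n+1}=\{(m,r)\in\mathbb{Z}^2:(0,0)\preccurlyeq(m,r)\preccurlyeq(n,0)\}$ with $x\ast y=\max\{(0,0),x+y-(n,0)\}$ and $x\to y=\min\{(n,0),(n,0)-x+y\}$. For an integer $p\ge1$ let $L_{p+1}=\{0,1,\dots,p\}$ with $\alpha\ast\beta=\max\{0,\alpha+\beta-p\}$. Define $$A=A^{p+1}_{n+1}=\{\langle(m,r),\alpha\rangle:(m,r)\in L^\omega_{n+1},\ \alpha\in\{0,p\}\}\cup\{\langle(m,r),\alpha\rangle:(0,0)\preccurlyeq(m,r)\preccurlyeq(n-1,0),\ 0<\alpha<p\}.$$ Order: $\langle(m,r),\alpha\rangle\le\langle(k,s),\beta\rangle$ iff one of: (o1) $\alpha\neq0$, $\alpha\le\beta$ and $(m,r)\preccurlyeq(k,s)$; (o2) $\alpha=\beta=0$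 and $(k,s)\preccurlyeq(m,r)$; (o3) $\alpha=0$, $\beta\ne0$ and $(n-1,0)\preccurlyeq(m+k,r+s)$. $\wedge,\vee$ denote meet and join for $\le$. Put $\bot=\langle(n,0),0\rangle$, $\top=\langle(n,0),p\rangle$. For $a=\langle(m,r),\alpha\rangle$, $b=\langle(k,s),\beta\rangle\in A$ define $a\odot b$ by: (P1) if $\alpha,\beta\ge1$ and $\alpha+\beta>p$: $a\odot b=\langle(m,r)\ast(k,s),\alpha+\beta-p\rangle$; (P2) if $\alpha,\beta\ge1$ and $\alpha+\beta\le p$: $a\odot b=\langle\min\{(n,0),(2n-(m+k+1),-(r+s))\},0\rangle$; (P3) if $\alpha\ge1$, $\beta=0$: $a\odot b=\langle(m,r)\to(k,s),0\rangle$, and if $\alpha=0$, $\beta\ge1$: $a\odot b=\langle(k,s)\to(m,r),0\rangle$; (P4) if $\alpha=\beta=0$: $a\odot b=\langle\min\{(n,0),(m+k+1,r+s)\},0\rangle$. Define $\sim\langle(m,r),\alpha\rangle=\langle(m,r),p-\alpha\rangle$ if $\alpha\in\{0,p\}$, and $\sim\langle(m,r),\alpha\rangle=\langle(n-1-m,-r),p-\alpha\rangle$ if $0<\alpha<p$. Define $a\Rightarrow b=\sim(a\odot\sim b)$ (so $\sim a=a\Rightarrow\bot$, interpreting $\neg x=x\to\bot$). The algebra $\mathbf{A}^{p+1}_{n+1}$ is $\langle A;\odot,\Rightarrow,\wedge,\vee,\bot,\top\rangle$. Terms: $a^0=\top$, $a^{k+1}=a\odot a^k$; $a\oplus b=\sim(\sim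 a\odot\sim b)$; $0.a=\bot$, $(k+1).a=a\oplus k.a$. *)

theory Defs
  imports Main
begin

text \<open>Elements of A^{p+1}_{n+1} are encoded as ((m,r),alpha) with integers m r alpha.
  The parameters n p are natural numbers (assumed >= 1 in the theorem).\<close>

type_synonym elt = "(int \<times> int) \<times> int"

definition lexle :: "int \<times> int \<Rightarrow> int \<times> int \<Rightarrow> bool" where
  "lexle x y \<longleftrightarrow> fst x < fst y \<or> (fst x = fst y \<and> snd x \<le> snd y)"

definition lmin :: "int \<times> int \<Rightarrow> int \<times> int \<Rightarrow> int \<times> int" where
  "lmin x y = (if lexle x y then x else y)"

definition lmax :: "int \<times> int \<Rightarrow> int \<times> int \<Rightarrow> int \<times> int" where
  "lmax x y = (if lexle x y then y else x)"

definition Lw :: "nat \<Rightarrow> (int \<times> int) set" where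
  "Lw n = {x. lexle (0,0) x \<and> lexle x (int n, 0)}"

definition lstar :: "nat \<Rightarrow> int \<times> int \<Rightarrow> int \<times> int \<Rightarrow> int \<times> int" where
  "lstar n x y = lmax (0,0) (fst x + fst y - int n, snd x + snd y)"

definition limp :: "nat \<Rightarrow> int \<times> int \<Rightarrow> int \<times> int \<Rightarrow> int \<times> int" where
  "limp n x y = lmin (int n, 0) (int n - fst x + fst y, - snd x + snd y)"

definition carrierA :: "nat \<Rightarrow> nat \<Rightarrow> elt set" where
  "carrierA n p =
     {((m,r),\<alpha>). (m,r) \<in> Lw n \<and> (\<alpha> = 0 \<or> \<alpha> = int p)}
   \<union> {((m,r),\<alpha>). lexle (0,0) (m,r) \<and> lexle (m,r) (int n - 1, 0) \<and> 0 < \<alpha> \<and> \<alpha> < int p}"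

definition leA :: "nat \<Rightarrow> elt \<Rightarrow> elt \<Rightarrow> bool" where
  "leA n a b = (case a of ((m,r),\<alpha>) \<Rightarrow> case b of ((k,s),\<beta>) \<Rightarrow>
      (\<alpha> \<noteq> 0 \<and> \<alpha> \<le> \<beta> \<and> lexle (m,r) (k,s))
    \<or> (\<alpha> = 0 \<and> \<beta> = 0 \<and> lexle (k,s) (m,r))
    \<or> (\<alpha> = 0 \<and> \<beta> \<noteq> 0 \<and> lexle (int n - 1, 0) (m + k, r + s)))"

definition joinA :: "nat \<Rightarrow> nat \<Rightarrow> elt \<Rightarrow> elt \<Rightarrow> elt" where
  "joinA n p a b = (THE c. c \<in> carrierA n p \<and> leA n a c \<and> leA n b c \<and>
      (\<forall>d\<in>carrierA n p. leA n a d \<and> leA n b d \<longrightarrow> leA n c d))"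

definition botA :: "nat \<Rightarrow> nat \<Rightarrow> elt" where
  "botA n p = ((int n, 0), 0)"

definition topA :: "nat \<Rightarrow> nat \<Rightarrow> elt" where
  "topA n p = ((int n, 0), int p)"

definition odotA :: "nat \<Rightarrow> nat \<Rightarrow> elt \<Rightarrow> elt \<Rightarrow> elt" where
  "odotA n p a b = (case a of ((m,r),\<alpha>) \<Rightarrow> case b of ((k,s),\<beta>) \<Rightarrow>
     if 1 \<le> \<alpha> \<and> 1 \<le> \<beta> \<and> \<alpha> + \<beta> > int p then (lstar n (m,r) (k,s), \<alpha> + \<beta> - int p)
     else if 1 \<le> \<alpha> \<and> 1 \<le> \<beta> then
       (lmin (int n, 0) (2 * int n - (m + k + 1), - (r + s)), 0)
     else if 1 \<le> \<alpha> \<and> \<beta> = 0 then (limp n (m,r) (k,s), 0)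
     else if \<alpha> = 0 \<and> 1 \<le> \<beta> then (limp n (k,s) (m,r), 0)
     else (lmin (int n, 0) (m + k + 1, r + s), 0))"

definition negA :: "nat \<Rightarrow> nat \<Rightarrow> elt \<Rightarrow> elt" where
  "negA n p a = (case a of ((m,r),\<alpha>) \<Rightarrow>
     if \<alpha> = 0 \<or> \<alpha> = int p then ((m,r), int p - \<alpha>)
     else ((int n - 1 - m, - r), int p - \<alpha>))"

definition oplusA :: "nat \<Rightarrow> nat \<Rightarrow> elt \<Rightarrow> elt \<Rightarrow> elt" where
  "oplusA n p a b = negA n p (odotA n p (negA n p a) (negA n p b))"

fun nmulA :: "nat \<Rightarrow> nat \<Rightarrow> nat \<Rightarrow> elt \<Rightarrow> elt" where
  "nmulA n p 0 a = botA n p"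
| "nmulA n p (Suc k) a = oplusA n p a (nmulA n p k a)"

end

theory Submission
  imports Defs
begin

text \<open>Multiples of an element have closed forms that depend only on its level \<alpha>.
  At level 0 every multiple stays at level 0, hence below \<top>.  At a positive level the
  first coordinate of j.a grows like j and the level like j\<alpha> (capped at p), so
  k.a = \<top> as soon as k \<ge> n + 1 and k \<ge> p.  One of a, \<sim>a has positive level, which
  gives the identity for k = max(n + 1, p).  For a = \<langle>(0,0),0\<rangle> one gets n.a = a and
  n.\<sim>a = \<langle>(n-1,0),p\<rangle> \<ge> a, so the join is \<langle>(n-1,0),p\<rangle> \<noteq> \<top>.\<close>

text \<open>The slack \<open>N \<le> M + 1\<close> lets the inner cap be (n-1,0), the cap of the middle levels.\<close>

lemma lmin_add_lmin_absorb:
  assumes "lexle (0,0) (m,r)" "N \<le> M + 1"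
  shows "lmin (N,0) (m + fst (lmin (M,0) y) + 1, r + snd (lmin (M,0) y))
       = lmin (N,0) (m + fst y + 1, r + snd y)"
  using assms by (cases y) (auto simp: lmin_def lexle_def)

lemma lmax_add_lmax_absorb:
  assumes "lexle (m,r) (N,0)"
  shows "lmax (0,0) (m + fst (lmax (0,0) y) - N, r + snd (lmax (0,0) y))
       = lmax (0,0) (m + fst y - N, r + snd y)"
  using assms by (cases y) (auto simp: lmax_def lexle_def)

lemma lmin_saturates:
  assumes "lexle (0,0) (m,r)" "n + 1 \<le> k"
  shows "lmin (int n, 0) (int k * m + int k - 1, int k * r) = (int n, 0)"
proof (cases "m = 0")
  case True
  then show ?thesis using assms by (auto simp: lmin_def lexle_def)
next
  case False
  then have "int k \<le> int k * m" using assms(1) by (simp add: lexle_def mult_le_cancel_left1)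
  then have "int n < int k * m + int k - 1" using assms(2) by linarith
  then show ?thesis by (simp add: lmin_def lexle_def)
qed

lemma negA_negA:
  assumes "a \<in> carrierA n p"
  shows "negA n p (negA n p a) = a"
  using assms by (auto simp: carrierA_def negA_def)

lemma negA_in_carrierA:
  assumes "a \<in> carrierA n p"
  shows "negA n p a \<in> carrierA n p"
  using assms by (auto simp: carrierA_def negA_def Lw_def lexle_def)

lemma odotA_topA:
  assumes "a \<in> carrierA n p" "p \<ge> 1"
  shows "odotA n p a (topA n p) = a"
  using assms by (auto simp: carrierA_def odotA_def topA_def lstar_def limp_def lmax_def lmin_def Lw_def lexle_def)

lemma nmulA_one:
  assumes "a \<in> carrierA n p" "p \<ge> 1"
  shows "nmulA n p 1 a = a"
proof -
  have "negA n p (botA n p) = topA n p" by (simp add: negA_def botA_def topA_def)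
  then show ?thesis
    using assms by (simp add: oplusA_def odotA_topA negA_in_carrierA negA_negA)
qed

lemma oplusA_zero_zero:
  assumes "p \<ge> 1"
  shows "oplusA n p ((m,r), 0) (x, 0) = (lmax (0,0) (m + fst x - int n, r + snd x), 0)"
  using assms by (cases x) (simp add: oplusA_def negA_def odotA_def lstar_def)

lemma oplusA_top_top:
  "oplusA n p ((m,r), int p) (x, int p) = (lmin (int n, 0) (m + fst x + 1, r + snd x), int p)"
  by (cases x) (simp add: oplusA_def negA_def odotA_def)

lemma oplusA_middle_top:
  assumes "0 < \<alpha>" "\<alpha> < int p"
  shows "oplusA n p ((m,r), \<alpha>) (x, int p) = (lmin (int n, 0) (m + fst x + 1, r + snd x), int p)"
  using assms by (cases x) (simp add: oplusA_def negA_def odotA_def limp_def algebra_simps)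

lemma oplusA_middle_middle_overflow:
  assumes "0 < \<alpha>" "0 < \<gamma>" "\<alpha> < int p" "\<gamma> < int p" "int p \<le> \<alpha> + \<gamma>"
  shows "oplusA n p ((m,r), \<alpha>) (x, \<gamma>) = (lmin (int n, 0) (m + fst x + 1, r + snd x), int p)"
  using assms by (cases x) (simp add: oplusA_def negA_def odotA_def algebra_simps)

lemma oplusA_middle_middle:
  assumes "0 < \<alpha>" "0 < \<gamma>" "\<alpha> + \<gamma> < int p"
  shows "oplusA n p ((m,r), \<alpha>) (x, \<gamma>) = (lmin (int n - 1, 0) (m + fst x + 1, r + snd x), \<alpha> + \<gamma>)"
  using assms by (cases x) (auto simp: oplusA_def negA_def odotA_def lstar_def lmax_def lmin_def lexle_def)

lemma nmulA_zero_level: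
  assumes "(m,r) \<in> Lw n" "p \<ge> 1" "j \<ge> 1"
  shows "nmulA n p j ((m,r), 0) = (lmax (0,0) (int j * m - (int j - 1) * int n, int j * r), 0)"
  using assms(3)
proof (induction j rule: nat_induct_at_least)
  case base
  have "((m,r), 0) \<in> carrierA n p" using assms(1) by (simp add: carrierA_def)
  then have "nmulA n p 1 ((m,r), 0) = ((m,r), 0)" using assms(2) by (rule nmulA_one)
  then show ?case using assms(1) by (simp add: lmax_def Lw_def lexle_def)
next
  case (Suc j)
  have "lexle (m,r) (int n, 0)" using assms(1) by (simp add: Lw_def)
  then show ?case
    using Suc.IH assms(2) lmax_add_lmax_absorb[of m r "int n" "(int j * m - (int j - 1) * int n, int j * r)"]
    by (simp add: oplusA_zero_zero algebra_simps)
qed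

lemma nmulA_top_level:
  assumes "(m,r) \<in> Lw n" "p \<ge> 1" "j \<ge> 1"
  shows "nmulA n p j ((m,r), int p) = (lmin (int n, 0) (int j * m + int j - 1, int j * r), int p)"
  using assms(3)
proof (induction j rule: nat_induct_at_least)
  case base
  have "((m,r), int p) \<in> carrierA n p" using assms(1) by (simp add: carrierA_def)
  then have "nmulA n p 1 ((m,r), int p) = ((m,r), int p)" using assms(2) by (rule nmulA_one)
  then show ?case using assms(1) by (auto simp: lmin_def Lw_def lexle_def)
next
  case (Suc j)
  have "lexle (0,0) (m,r)" using assms(1) by (simp add: Lw_def)
  then show ?case
    using Suc.IH lmin_add_lmin_absorb[of m r "int n" "int n" "(int j * m + int j - 1, int j * r)"]
    by (simp add: oplusA_top_top algebra_simps)
qed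

lemma nmulA_middle_level:
  assumes a: "((m,r), \<beta>) \<in> carrierA n p" and \<beta>: "0 < \<beta>" "\<beta> < int p" and "j \<ge> 1"
  shows "nmulA n p j ((m,r), \<beta>) =
    (if int j * \<beta> < int p then (lmin (int n - 1, 0) (int j * m + int j - 1, int j * r), int j * \<beta>)
     else (lmin (int n, 0) (int j * m + int j - 1, int j * r), int p))"
  using \<open>j \<ge> 1\<close>
proof (induction j rule: nat_induct_at_least)
  case base
  have "nmulA n p 1 ((m,r), \<beta>) = ((m,r), \<beta>)" using a \<beta> by (intro nmulA_one) auto
  moreover have "lexle (m,r) (int n - 1, 0)" using a \<beta> by (auto simp: carrierA_def)
  ultimately show ?case using \<beta> by (auto simp: lmin_def lexle_def)
next
  case (Suc j)
  have m: "lexle (0,0) (m,r)" using a by (auto simp: carrierA_def Lw_def)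
  have "\<beta> \<le> int j * \<beta>" using Suc.hyps \<beta> by (simp add: mult_le_cancel_right1)
  define y where "y = (int j * m + int j - 1, int j * r)"
  consider "int (Suc j) * \<beta> < int p"
    | "int j * \<beta> < int p" "int p \<le> int (Suc j) * \<beta>"
    | "int p \<le> int j * \<beta>"
    by linarith
  then show ?case
  proof cases
    case 1
    then show ?thesis
      using Suc.IH \<beta> \<open>\<beta> \<le> int j * \<beta>\<close> lmin_add_lmin_absorb[OF m, of "int n - 1" "int n - 1" y]
      by (simp add: oplusA_middle_middle y_def algebra_simps)
  next
    case 2
    then show ?thesis
      using Suc.IH \<beta> \<open>\<beta> \<le> int j * \<beta>\<close> lmin_add_lmin_absorb[OF m, of "int n" "int n - 1" y]
      by (simp add: oplusA_middle_middle_overflow y_def algebra_simps)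
  next
    case 3
    then show ?thesis
      using Suc.IH \<beta> \<open>\<beta> \<le> int j * \<beta>\<close> lmin_add_lmin_absorb[OF m, of "int n" "int n" y]
      by (simp add: oplusA_middle_top y_def algebra_simps)
  qed
qed

lemma leA_refl: "a \<in> carrierA n p \<Longrightarrow> leA n a a"
  by (auto simp: carrierA_def leA_def lexle_def)

lemma leA_antisym:
  assumes "a \<in> carrierA n p" "b \<in> carrierA n p" "leA n a b" "leA n b a"
  shows "a = b"
  using assms by (auto simp: carrierA_def leA_def lexle_def)

lemma joinA_eq_right:
  assumes "leA n a b" "b \<in> carrierA n p"
  shows "joinA n p a b = b"
  unfolding joinA_def
proof (rule the_equality)
  show "b \<in> carrierA n p \<and> leA n a b \<and> leA n b b \<and>
      (\<forall>d\<in>carrierA n p. leA n a d \<and> leA n b d \<longrightarrow> leA n b d)"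
    using assms leA_refl by blast
next
  fix c assume "c \<in> carrierA n p \<and> leA n a c \<and> leA n b c \<and>
      (\<forall>d\<in>carrierA n p. leA n a d \<and> leA n b d \<longrightarrow> leA n c d)"
  then show "c = b" using assms leA_refl leA_antisym by metis
qed

lemma joinA_commute: "joinA n p a b = joinA n p b a"
  unfolding joinA_def by (metis (no_types, lifting))

lemma topA_in_carrierA: "topA n p \<in> carrierA n p"
  by (auto simp: topA_def carrierA_def Lw_def lexle_def)

lemma nmulA_eq_topA:
  assumes a: "((m,r), \<alpha>) \<in> carrierA n p" and "0 < \<alpha>" "p \<ge> 1" and k: "n + 1 \<le> k" "p \<le> k"
  shows "nmulA n p k ((m,r), \<alpha>) = topA n p"
proof -
  have m: "lexle (0,0) (m,r)" using a by (auto simp: carrierA_def Lw_def)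
  have "k \<ge> 1" using k by simp
  show ?thesis
  proof (cases "\<alpha> = int p")
    case True
    have "(m,r) \<in> Lw n" using a \<open>0 < \<alpha>\<close> by (auto simp: carrierA_def Lw_def lexle_def)
    then show ?thesis
      using True \<open>p \<ge> 1\<close> \<open>k \<ge> 1\<close> by (simp add: nmulA_top_level lmin_saturates[OF m k(1)] topA_def)
  next
    case False
    then have "\<alpha> < int p" using a by (auto simp: carrierA_def)
    moreover have "int p \<le> int k * \<alpha>"
      using k(2) \<open>0 < \<alpha>\<close> mult_le_cancel_left1[of "int k" \<alpha>] by linarith
    ultimately show ?thesis
      using a \<open>0 < \<alpha>\<close> \<open>k \<ge> 1\<close> by (simp add: nmulA_middle_level lmin_saturates[OF m k(1)] topA_def)
  qed
qed

lemma nmulA_le_topA: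
  assumes a: "a \<in> carrierA n p" and "p \<ge> 1" and k: "n + 1 \<le> k" "p \<le> k"
  shows "leA n (nmulA n p k a) (topA n p)"
proof -
  obtain m r \<alpha> where a_eq: "a = ((m,r), \<alpha>)" by (metis prod.collapse)
  show ?thesis
  proof (cases "\<alpha> = 0")
    case True
    then have "(m,r) \<in> Lw n" using a by (auto simp: a_eq carrierA_def)
    then show ?thesis
      using True \<open>p \<ge> 1\<close> k by (auto simp: a_eq nmulA_zero_level leA_def topA_def lmax_def lexle_def)
  next
    case False
    then have "0 < \<alpha>" using a by (auto simp: a_eq carrierA_def)
    then show ?thesis
      using a nmulA_eq_topA[of m r \<alpha>, OF _ _ \<open>p \<ge> 1\<close> k] leA_refl[OF topA_in_carrierA]
      by (simp add: a_eq)
  qed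
qed

lemma joinA_nmulA_negA_eq_topA:
  assumes a: "a \<in> carrierA n p" and "p \<ge> 1" and k: "n + 1 \<le> k" "p \<le> k"
  shows "joinA n p (nmulA n p k a) (nmulA n p k (negA n p a)) = topA n p"
proof -
  obtain m r \<alpha> where a_eq: "a = ((m,r), \<alpha>)" by (metis prod.collapse)
  have na: "negA n p a \<in> carrierA n p" using a by (rule negA_in_carrierA)
  show ?thesis
  proof (cases "\<alpha> = 0")
    case True
    then have "nmulA n p k (negA n p a) = topA n p"
      using na \<open>p \<ge> 1\<close> k by (simp add: a_eq negA_def nmulA_eq_topA)
    then show ?thesis
      using a \<open>p \<ge> 1\<close> k by (simp add: a_eq joinA_eq_right nmulA_le_topA topA_in_carrierA)
  next
    case False
    then have "nmulA n p k a = topA n p"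
      using a \<open>p \<ge> 1\<close> k by (auto simp: a_eq carrierA_def intro: nmulA_eq_topA)
    then show ?thesis
      using na \<open>p \<ge> 1\<close> k by (metis joinA_commute joinA_eq_right nmulA_le_topA topA_in_carrierA)
  qed
qed

lemma nmulA_origin_zero_level:
  assumes "n \<ge> 1" "p \<ge> 1"
  shows "nmulA n p n ((0,0), 0) = ((0,0), 0)"
proof -
  have "lmax (0,0) (x, 0) = (0,0)" if "x \<le> 0" for x :: int
    using that by (auto simp: lmax_def lexle_def)
  moreover have "- ((int n - 1) * int n) \<le> 0" using assms(1) by simp
  ultimately have "lmax (0,0) (- ((int n - 1) * int n), 0) = (0,0)" by blast
  moreover have "(0,0) \<in> Lw n" by (auto simp: Lw_def lexle_def)
  ultimately show ?thesis using assms by (simp add: nmulA_zero_level)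
qed

lemma joinA_nmulA_negA_origin:
  assumes "n \<ge> 1" "p \<ge> 1"
  shows "joinA n p (nmulA n p n ((0,0), 0)) (nmulA n p n (negA n p ((0,0), 0)))
       = ((int n - 1, 0), int p)"
proof -
  have "(0,0) \<in> Lw n" by (auto simp: Lw_def lexle_def)
  then have "nmulA n p n (negA n p ((0,0), 0)) = ((int n - 1, 0), int p)"
    using assms by (simp add: negA_def nmulA_top_level lmin_def lexle_def)
  moreover have "joinA n p ((0,0), 0) ((int n - 1, 0), int p) = ((int n - 1, 0), int p)"
    using assms by (intro joinA_eq_right) (auto simp: leA_def carrierA_def Lw_def lexle_def)
  ultimately show ?thesis
    using assms by (simp add: nmulA_origin_zero_level)
qed

theorem mainTheorem16:
  fixes n p :: nat
  assumes "n \<ge> 1" and "p \<ge> 1"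
  shows "(\<forall>a\<in>carrierA n p.
            joinA n p (nmulA n p (max (n+1) p) a) (nmulA n p (max (n+1) p) (negA n p a)) = topA n p)
       \<and> (\<exists>a\<in>carrierA n p.
            joinA n p (nmulA n p n a) (nmulA n p n (negA n p a)) \<noteq> topA n p)"
proof
  show "\<forall>a\<in>carrierA n p.
      joinA n p (nmulA n p (max (n+1) p) a) (nmulA n p (max (n+1) p) (negA n p a)) = topA n p"
    using \<open>p \<ge> 1\<close> by (simp add: joinA_nmulA_negA_eq_topA)
next
  have "((0,0), 0) \<in> carrierA n p" by (auto simp: carrierA_def Lw_def lexle_def)
  moreover have "((int n - 1, 0), int p) \<noteq> topA n p" by (simp add: topA_def)
  ultimately show "\<exists>a\<in>carrierA n p. joinA n p (nmulA n p n a) (nmulA n p n (negA n p a)) \<noteq> topA n p"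
    using assms joinA_nmulA_negA_origin by metis
qed

end
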